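(* In the two-party one-way communication (Holevo–Frenkel–Weiner) scenario, the utility of a one-bit classical channel increases when the assisting shared randomness is increased from $1$ bit to $\log 3$ bits: there exist finite sets $\mathcal{X},\mathcal{B}$ and a payoff function $\beta$ on correlations such that $\sup_{P\in\mathcal{C}_3}\beta(P)>\sup_{P\in\mathcal{C}_2}\beta(P)$.
   Context: Scenario: Alice receives an input $x$ from a finite set $\mathcal{X}$, Bob must output $b$ from a finite set $\mathcal{B}$; a correlation is $P=(P(b|x))$, a task is a real payoff function $\beta$ on correlations, and the utility of a resource is $\sup\beta(P)$ over correlations achievable with it. $\mathcal{C}$: correlations $P(b|x)=\sum_{m\in\{0,1\}}E(m|x)D(b|m)$ with $E(\cdot|x)$ a probability distribution on $\{0,1\}$ for each $x$ and $D(\cdot|m)$ a probability distribution on $\mathcal{B}$ for each $m$ (one bit of classical communication with local randomness). $\mathcal{C}_K$: one bit of classical communication assisted by a shared random variable taking at most $K$ values, i.e. correlations $\sum_{\lambda=1}^{K}q_\lambda P_\lambda$ with $q_\lambda\ge0$, $\sum_\lambda q_\lambda=1$, $P_\lambda\in\mathcal{C}$. Thus $\mathcal{C}_2$ corresponds to (at most) $1$ bit of shared randomness (a binary shared variable with arbitrary bias) and $\mathcal{C}_3$ to $\log 3$ bits (a shared variable with three values). *)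

theory Defs
  imports "HOL-Analysis.Analysis" "HOL-Library.Extended_Real"
begin

text \<open>A correlation is represented as a function P :: nat => nat => real, P x b = P(b|x),
  normalised to be 0 outside X x B.\<close>

definition one_bit_corr :: "nat set \<Rightarrow> nat set \<Rightarrow> (nat \<Rightarrow> nat \<Rightarrow> real) set" where
  "one_bit_corr X B = {P. \<exists>E D :: nat \<Rightarrow> nat \<Rightarrow> real.
      (\<forall>x\<in>X. (\<forall>m\<in>{0,1}. E x m \<ge> 0) \<and> (\<Sum>m\<in>{0,1}. E x m) = 1) \<and>
      (\<forall>m\<in>{0,1::nat}. (\<forall>b\<in>B. D m b \<ge> 0) \<and> (\<Sum>b\<in>B. D m b) = 1) \<and>
      (\<forall>x b. P x b = (if x \<in> X \<and> b \<in> B then (\<Sum>m\<in>{0,1}. E x m * D m b) else 0))}"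

text \<open>One bit of communication assisted by a shared random variable with at most K values:
  convex combinations of K elements of the one-bit set.\<close>
definition shared_corr :: "nat \<Rightarrow> nat set \<Rightarrow> nat set \<Rightarrow> (nat \<Rightarrow> nat \<Rightarrow> real) set" where
  "shared_corr K X B = {P. \<exists>(q :: nat \<Rightarrow> real) (Q :: nat \<Rightarrow> nat \<Rightarrow> nat \<Rightarrow> real).
      (\<forall>l\<in>{1..K}. q l \<ge> 0 \<and> Q l \<in> one_bit_corr X B) \<and> (\<Sum>l\<in>{1..K}. q l) = 1 \<and>
      P = (\<lambda>x b. \<Sum>l\<in>{1..K}. q l * Q l x b)}"

definition utility :: "((nat \<Rightarrow> nat \<Rightarrow> real) \<Rightarrow> real) \<Rightarrow> (nat \<Rightarrow> nat \<Rightarrow> real) set \<Rightarrow> ereal" where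
  "utility \<beta> S = (SUP P\<in>S. ereal (\<beta> P))"

end

theory Submission
  imports Defs
begin

text \<open>With two values of shared randomness, every row P(.|x) of a correlation is an affine
  function of the two numbers E_1(0|x), E_2(0|x), so the differences P(.|x) - P(.|x0) span at
  most a plane and a 3x3 minor of them has vanishing determinant. Mixing uniformly the three
  deterministic one-bit strategies "output l if x is neither 0 nor l, else output 0"
  (l = 1, 2, 3) gives a correlation in the three-valued class whose minor is the matrix with
  zero diagonal and off-diagonal entries 1/3, of determinant 2/27. That determinant is the
  payoff.\<close>

definition det3 :: "(nat \<Rightarrow> nat \<Rightarrow> real) \<Rightarrow> real" where
  "det3 M = M 1 1 * (M 2 2 * M 3 3 - M 2 3 * M 3 2)
          - M 1 2 * (M 2 1 * M 3 3 - M 2 3 * M 3 1)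
          + M 1 3 * (M 2 1 * M 3 2 - M 2 2 * M 3 1)"

lemma det3_rank_two:
  assumes "\<forall>i\<in>{1,2,3}. \<forall>j\<in>{1,2,3}. M i j = a i * u j + c i * w j"
  shows "det3 M = 0"
  using assms by (simp add: det3_def algebra_simps)

lemma one_bit_corr_affine:
  assumes "P \<in> one_bit_corr X B"
  shows "\<exists>v e u. \<forall>x\<in>X. \<forall>b\<in>B. P x b = v b + e x * u b"
proof -
  obtain E D :: "nat \<Rightarrow> nat \<Rightarrow> real" where
    E: "\<forall>x\<in>X. (\<Sum>m\<in>{0,1}. E x m) = 1" and
    P: "\<forall>x b. P x b = (if x \<in> X \<and> b \<in> B then (\<Sum>m\<in>{0,1}. E x m * D m b) else 0)"
    using assms unfolding one_bit_corr_def by blast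
  have "P x b = D 1 b + E x 0 * (D 0 b - D 1 b)" if "x \<in> X" "b \<in> B" for x b
  proof -
    have "E x 0 + E x 1 = 1" using E that by simp
    then have "E x 1 = 1 - E x 0" by linarith
    have "P x b = E x 0 * D 0 b + E x 1 * D 1 b" using P that by simp
    also have "\<dots> = D 1 b + E x 0 * (D 0 b - D 1 b)"
      unfolding \<open>E x 1 = 1 - E x 0\<close> by (simp add: algebra_simps)
    finally show ?thesis .
  qed
  then show ?thesis
    by (intro exI[of _ "D 1"] exI[of _ "\<lambda>x. E x 0"] exI[of _ "\<lambda>b. D 0 b - D 1 b"]) simp
qed

lemma shared_corr_affine:
  assumes "P \<in> shared_corr K X B"
  shows "\<exists>v e u. \<forall>x\<in>X. \<forall>b\<in>B. P x b = v b + (\<Sum>l\<in>{1..K}. e l x * u l b)"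
proof -
  obtain q Q where
    Q: "\<forall>l\<in>{1..K}. Q l \<in> one_bit_corr X B" and
    P: "P = (\<lambda>x b. \<Sum>l\<in>{1..K}. q l * Q l x b)"
    using assms unfolding shared_corr_def by blast
  have "\<forall>l\<in>{1..K}. \<exists>v e u. \<forall>x\<in>X. \<forall>b\<in>B. Q l x b = v b + e x * u b"
    using Q one_bit_corr_affine by blast
  then obtain v e u where
    Q_affine: "\<forall>l\<in>{1..K}. \<forall>x\<in>X. \<forall>b\<in>B. Q l x b = v l b + e l x * u l b"
    unfolding bchoice_iff by blast
  have "P x b = (\<Sum>l\<in>{1..K}. q l * v l b) + (\<Sum>l\<in>{1..K}. e l x * (q l * u l b))"
    if "x \<in> X" "b \<in> B" for x b
    using Q_affine that unfolding P sum.distrib[symmetric]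
    by (intro sum.cong) (simp_all add: algebra_simps)
  then show ?thesis
    by (intro exI[of _ "\<lambda>b. \<Sum>l\<in>{1..K}. q l * v l b"] exI[of _ e]
        exI[of _ "\<lambda>l b. q l * u l b"]) simp
qed

lemma shared_corr_two_det3:
  assumes "P \<in> shared_corr 2 X B" "x0 \<in> X" "{1,2,3} \<subseteq> X" "{1,2,3} \<subseteq> B"
  shows "det3 (\<lambda>x b. P x b - P x0 b) = 0"
proof -
  obtain v e u where P: "\<forall>x\<in>X. \<forall>b\<in>B. P x b = v b + (\<Sum>l\<in>{1..2::nat}. e l x * u l b)"
    using shared_corr_affine[OF assms(1)] by blast
  have "{1..2::nat} = {1,2}" by auto
  then have "P x b - P x0 b = (e 1 x - e 1 x0) * u 1 b + (e 2 x - e 2 x0) * u 2 b"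
    if "x \<in> X" "b \<in> B" for x b
    using P that assms(2) by (simp add: algebra_simps)
  then show ?thesis
    using assms(3,4) by (intro det3_rank_two) auto
qed

definition deterministic_corr :: "nat set \<Rightarrow> nat set \<Rightarrow> (nat \<Rightarrow> nat) \<Rightarrow> nat \<Rightarrow> nat \<Rightarrow> real" where
  "deterministic_corr X B s x b = (if x \<in> X \<and> b \<in> B \<and> b = s x then 1 else 0)"

lemma deterministic_corr_one_bit:
  assumes "s ` X \<subseteq> {b0, b1}" "b0 \<in> B" "b1 \<in> B" "finite B"
  shows "deterministic_corr X B s \<in> one_bit_corr X B"
proof -
  define E :: "nat \<Rightarrow> nat \<Rightarrow> real" where
    "E x m = (if m = 0 \<longleftrightarrow> s x = b0 then 1 else 0)" for x m
  define D :: "nat \<Rightarrow> nat \<Rightarrow> real" where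
    "D m b = (if b = (if m = 0 then b0 else b1) then 1 else 0)" for m b
  have "deterministic_corr X B s x b
          = (if x \<in> X \<and> b \<in> B then (\<Sum>m\<in>{0,1}. E x m * D m b) else 0)" for x b
    using assms(1) by (auto simp: deterministic_corr_def E_def D_def)
  moreover have "(\<Sum>b\<in>B. D m b) = 1" for m
    using assms(2-4) by (simp add: D_def)
  ultimately show ?thesis
    unfolding one_bit_corr_def by (intro CollectI exI[of _ E] exI[of _ D]) (auto simp: E_def D_def)
qed

lemma uniform_mixture_shared_corr:
  assumes "K > 0" "\<forall>l\<in>{1..K}. Q l \<in> one_bit_corr X B"
  shows "(\<lambda>x b. (\<Sum>l\<in>{1..K}. Q l x b) / real K) \<in> shared_corr K X B"
  unfolding shared_corr_def
  using assms by (intro CollectI exI[of _ "\<lambda>_. 1 / real K"] exI[of _ Q])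
    (auto simp: sum_divide_distrib)

definition witness_corr :: "nat \<Rightarrow> nat \<Rightarrow> real" where
  "witness_corr x b = (\<Sum>l\<in>{1..3}.
     deterministic_corr {0..3} {0..3} (\<lambda>y. if y = 0 \<or> y = l then 0 else l) x b) / 3"

lemma witness_corr_shared_three: "witness_corr \<in> shared_corr 3 {0..3} {0..3}"
proof -
  have "(\<lambda>y. if y = 0 \<or> y = l then 0 else l) ` {0..3} \<subseteq> {0, l}" for l :: nat
    by auto
  then have "\<forall>l\<in>{1..3}. deterministic_corr {0..3} {0..3}
               (\<lambda>y. if y = 0 \<or> y = l then 0 else l) \<in> one_bit_corr {0..3} {0..3}"
    by (intro ballI deterministic_corr_one_bit) auto
  from uniform_mixture_shared_corr[OF _ this] show ?thesis
    by (simp add: witness_corr_def[abs_def])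
qed

lemma det3_witness_corr: "det3 (\<lambda>x b. witness_corr x b - witness_corr 0 b) = 2 / 27"
proof -
  have "{1..3::nat} = {1,2,3}" by auto
  then show ?thesis
    by (simp add: det3_def witness_corr_def deterministic_corr_def)
qed

theorem theorem3:
  shows "\<exists>(X :: nat set) (B :: nat set) (\<beta> :: (nat \<Rightarrow> nat \<Rightarrow> real) \<Rightarrow> real).
           finite X \<and> X \<noteq> {} \<and> finite B \<and> B \<noteq> {} \<and>
           utility \<beta> (shared_corr 3 X B) > utility \<beta> (shared_corr 2 X B)"
proof (intro exI conjI)
  let ?\<beta> = "\<lambda>P. det3 (\<lambda>x b. P x b - P 0 b)"
  have "utility ?\<beta> (shared_corr 2 {0..3} {0..3}) \<le> 0"
    unfolding utility_def by (intro SUP_least) (simp add: shared_corr_two_det3)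
  also have "\<dots> < ereal (2 / 27)" by simp
  also have "\<dots> \<le> utility ?\<beta> (shared_corr 3 {0..3} {0..3})"
    unfolding utility_def using witness_corr_shared_three det3_witness_corr
    by (intro SUP_upper2[of witness_corr]) auto
  finally show "utility ?\<beta> (shared_corr 3 {0..3} {0..3}) > utility ?\<beta> (shared_corr 2 {0..3} {0..3})" .
qed auto

end
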